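(* Let $G=(V,E)$ be a tree on $n$ vertices, $\alpha\in(0,1)$, $\bm q$ a probability distribution on $V$, and $v\in V$ with $d_v=|\Gamma(v)|$. Let $W=V\setminus(\Gamma(v)\cup\{v\})$, and define $F(\bm x,\bm y)$ for $\bm x\in\{0,1\}^{\Gamma(v)}\setminus\{\bm 0\}$, $\bm y\in\{0,1\}^{W}$ as below. Fix an ordering of $W$ in which $e_u$ is nonincreasing (ties broken arbitrarily) and for $0\le m\le |W|$ let $\hat{\bm y}^{m}\in\{0,1\}^W$ be the indicator vector of the first $m$ elements in this ordering. Then for every $l$ with $1\le l\le n-1$, $$\max\{F(\bm x,\bm y): \bm 1^T\bm x+\bm 1^T\bm y=l\}=\max\{F(\bm x,\hat{\bm y}^{l_2}): \bm 1^T\bm x=l_1,\ 1\le l_1\le d_v,\ 0\le l_2\le |W|,\ l_1+l_2=l\},$$ where both maxima are over the feasible $\bm x\neq\bm 0$ (and $\bm y$) satisfying the stated constraints.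
   Context: Potentials: $\phi_{uv}$ is the probability that an $\alpha$-random walk on the tree (at each step, with probability $\alpha$ it jumps, otherwise moves to a uniformly random neighbour) started at $u$ visits $v$ before its first jump; $\phi_{vv}=1$ and $\phi_{uv}=\frac{1-\alpha}{|\Gamma(u)|}\sum_{w\in\Gamma(u)}\phi_{wv}$ for $u\ne v$, with $\Gamma(u)$ the neighbour set. Root the tree at $v$; for $i\in\Gamma(v)$ let $N_i$ be the vertex set of the subtree rooted at $i$ (including $i$); every $u\in W$ lies in $N_i\setminus\{i\}$ for exactly one $i\in\Gamma(v)$. Constants: $a_i=\alpha\sum_{u\in N_i}q_u\phi_{uv}$ and $c_i=(1-\alpha)\phi_{iv}$ for $i\in\Gamma(v)$; $e_u=(1-\alpha)\phi_{uv}$ for $u\in W$. The function (the PageRank of $v$ in the request-delete-model when $v$ keeps the edges to $\{i:x_i=1\}$ and adds outgoing arcs to $\{u:y_u=1\}$) is $$F(\bm x,\bm y)=(\bm 1^T\bm x+\bm 1^T\bm y)\,\frac{\sum_{i\in\Gamma(v)}a_ix_i}{\sum_{i\in\Gamma(v)}\Big((1-c_i)x_i+\sum_{u\in N_i\setminus\{i\}}(1-e_ux_i)\,y_u\Big)}.$$ *)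

theory Defs
  imports "HOL-Analysis.Analysis"
begin

definition graph :: "'a set \<Rightarrow> ('a \<Rightarrow> 'a \<Rightarrow> bool) \<Rightarrow> bool" where
  "graph V E \<longleftrightarrow> finite V \<and> (\<forall>u w. E u w \<longrightarrow> u \<in> V \<and> w \<in> V \<and> E w u \<and> u \<noteq> w)"

definition nbrs :: "'a set \<Rightarrow> ('a \<Rightarrow> 'a \<Rightarrow> bool) \<Rightarrow> 'a \<Rightarrow> 'a set" where
  "nbrs V E u = {w \<in> V. E u w}"

definition connected_graph :: "'a set \<Rightarrow> ('a \<Rightarrow> 'a \<Rightarrow> bool) \<Rightarrow> bool" where
  "connected_graph V E \<longleftrightarrow> (\<forall>u\<in>V. \<forall>w\<in>V. E\<^sup>*\<^sup>* u w)"

definition is_cycle :: "('a \<Rightarrow> 'a \<Rightarrow> bool) \<Rightarrow> 'a list \<Rightarrow> bool" where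
  "is_cycle E cs \<longleftrightarrow> length cs \<ge> 3 \<and> distinct cs \<and>
     (\<forall>i. Suc i < length cs \<longrightarrow> E (cs ! i) (cs ! Suc i)) \<and> E (last cs) (hd cs)"

definition tree :: "'a set \<Rightarrow> ('a \<Rightarrow> 'a \<Rightarrow> bool) \<Rightarrow> bool" where
  "tree V E \<longleftrightarrow> graph V E \<and> V \<noteq> {} \<and> connected_graph V E \<and> \<not> (\<exists>cs. is_cycle E cs)"

text \<open>Potentials phi_{uv} (as a function of u, for fixed target v): the solution of
  phi_vv = 1, phi_uv = (1-alpha)/|Gamma(u)| * sum_{w in Gamma(u)} phi_wv for u in V, u \<noteq> v.\<close>
definition phi :: "'a set \<Rightarrow> ('a \<Rightarrow> 'a \<Rightarrow> bool) \<Rightarrow> real \<Rightarrow> 'a \<Rightarrow> 'a \<Rightarrow> real" where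
  "phi V E \<alpha> v = (THE f. f v = 1 \<and>
     (\<forall>u\<in>V - {v}. f u = (1 - \<alpha>) / real (card (nbrs V E u)) * (\<Sum>w\<in>nbrs V E u. f w)) \<and>
     (\<forall>u. u \<notin> V \<longrightarrow> f u = 0))"

definition subtree :: "('a \<Rightarrow> 'a \<Rightarrow> bool) \<Rightarrow> 'a \<Rightarrow> 'a \<Rightarrow> 'a set" where
  "subtree E v i = {u. (\<lambda>a b. E a b \<and> a \<noteq> v \<and> b \<noteq> v)\<^sup>*\<^sup>* i u}"

definition W_set :: "'a set \<Rightarrow> ('a \<Rightarrow> 'a \<Rightarrow> bool) \<Rightarrow> 'a \<Rightarrow> 'a set" where
  "W_set V E v = V - (nbrs V E v \<union> {v})"

definition a_const :: "'a set \<Rightarrow> ('a \<Rightarrow> 'a \<Rightarrow> bool) \<Rightarrow> real \<Rightarrow> ('a \<Rightarrow> real) \<Rightarrow> 'a \<Rightarrow> 'a \<Rightarrow> real" where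
  "a_const V E \<alpha> q v i = \<alpha> * (\<Sum>u\<in>subtree E v i. q u * phi V E \<alpha> v u)"

definition c_const :: "'a set \<Rightarrow> ('a \<Rightarrow> 'a \<Rightarrow> bool) \<Rightarrow> real \<Rightarrow> 'a \<Rightarrow> 'a \<Rightarrow> real" where
  "c_const V E \<alpha> v i = (1 - \<alpha>) * phi V E \<alpha> v i"

definition e_const :: "'a set \<Rightarrow> ('a \<Rightarrow> 'a \<Rightarrow> bool) \<Rightarrow> real \<Rightarrow> 'a \<Rightarrow> 'a \<Rightarrow> real" where
  "e_const V E \<alpha> v u = (1 - \<alpha>) * phi V E \<alpha> v u"

definition F :: "'a set \<Rightarrow> ('a \<Rightarrow> 'a \<Rightarrow> bool) \<Rightarrow> real \<Rightarrow> ('a \<Rightarrow> real) \<Rightarrow> 'a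
                  \<Rightarrow> ('a \<Rightarrow> real) \<Rightarrow> ('a \<Rightarrow> real) \<Rightarrow> real" where
  "F V E \<alpha> q v x y =
     ((\<Sum>i\<in>nbrs V E v. x i) + (\<Sum>u\<in>W_set V E v. y u)) *
     ((\<Sum>i\<in>nbrs V E v. a_const V E \<alpha> q v i * x i) /
      (\<Sum>i\<in>nbrs V E v. (1 - c_const V E \<alpha> v i) * x i +
          (\<Sum>u\<in>subtree E v i - {i}. (1 - e_const V E \<alpha> v u * x i) * y u)))"

definition ind :: "'a set \<Rightarrow> 'a \<Rightarrow> real" where
  "ind S = (\<lambda>u. if u \<in> S then 1 else 0)"

end

theory Submission
  imports Defs
begin

text \<open>
  For indicator vectors \<open>x = ind X\<close>, \<open>y = ind Y\<close> the objective factorises as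
  \<open>F = (|X| + |Y|) * (\<Sum>i\<in>X. a i) / D(X, Y)\<close> with
  \<open>D(X, Y) = (\<Sum>i\<in>X. 1 - c i) + (\<Sum>u\<in>Y. 1 - e u * [branch u \<in> X])\<close>, where \<open>branch u\<close> is the
  neighbour of \<open>v\<close> whose subtree contains \<open>u\<close>.  Since potentials decrease away from \<open>v\<close>
  (maximum principle), \<open>e u \<le> c (branch u)\<close>.  An exchange argument then shows that every
  feasible pair \<open>(X, Y)\<close> is dominated by a pair \<open>(X', prefix k)\<close> of the same size: a vertex of
  \<open>Y\<close> outside the prefix is either swapped for a missing prefix vertex (if that vertex's
  branch is already in \<open>X\<close>) or traded for that branch; neither move increases \<open>D\<close>.
\<close>

section \<open>Potentials as fixed points of the averaging operator\<close>

definition pot_step :: "'a set \<Rightarrow> ('a \<Rightarrow> 'a \<Rightarrow> bool) \<Rightarrow> real \<Rightarrow> 'a \<Rightarrow> ('a \<Rightarrow> real) \<Rightarrow> 'a \<Rightarrow> real" where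
  "pot_step V E \<alpha> v g u =
     (if u = v then 1
      else if u \<in> V then (1 - \<alpha>) / real (card (nbrs V E u)) * (\<Sum>w\<in>nbrs V E u. g w)
      else 0)"

lemma scaled_mean_abs_le:
  fixes g :: "'a \<Rightarrow> real"
  assumes "0 \<le> s" and "0 \<le> K" and bound: "\<And>w. w \<in> N \<Longrightarrow> \<bar>g w\<bar> \<le> K"
  shows "\<bar>s / real (card N) * (\<Sum>w\<in>N. g w)\<bar> \<le> s * K"
proof (cases "card N = 0")
  case True
  then show ?thesis using assms by simp
next
  case False
  have "\<bar>\<Sum>w\<in>N. g w\<bar> \<le> (\<Sum>w\<in>N. \<bar>g w\<bar>)" by (rule sum_abs)
  also have "\<dots> \<le> real (card N) * K" using bound by (rule sum_bounded_above)
  finally have sum_bound: "\<bar>\<Sum>w\<in>N. g w\<bar> \<le> real (card N) * K" .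
  have "\<bar>s / real (card N) * (\<Sum>w\<in>N. g w)\<bar> = s / real (card N) * \<bar>\<Sum>w\<in>N. g w\<bar>"
    using assms(1) by (simp add: abs_mult)
  also have "\<dots> \<le> s / real (card N) * (real (card N) * K)"
    using assms(1) sum_bound by (intro mult_left_mono) auto
  also have "\<dots> = s * K" using False by simp
  finally show ?thesis .
qed

lemma pot_step_contraction:
  assumes "\<alpha> \<le> 1" and close: "\<And>w. \<bar>g w - h w\<bar> \<le> K"
  shows "\<bar>pot_step V E \<alpha> v g u - pot_step V E \<alpha> v h u\<bar> \<le> (1 - \<alpha>) * K"
proof -
  let ?N = "nbrs V E u" and ?s = "(1 - \<alpha>) / real (card (nbrs V E u))"
  have "0 \<le> K" using close[of u] by linarith
  have "?s * (\<Sum>w\<in>?N. g w) - ?s * (\<Sum>w\<in>?N. h w) = ?s * (\<Sum>w\<in>?N. g w - h w)"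
    by (simp add: sum_subtractf right_diff_distrib)
  moreover have "\<bar>?s * (\<Sum>w\<in>?N. g w - h w)\<bar> \<le> (1 - \<alpha>) * K"
    using assms \<open>0 \<le> K\<close> by (intro scaled_mean_abs_le) auto
  ultimately show ?thesis
    using assms(1) \<open>0 \<le> K\<close> by (simp add: pot_step_def)
qed

lemma pot_step_unit_interval:
  assumes "0 \<le> \<alpha>" and "\<alpha> \<le> 1" and "\<And>w. 0 \<le> g w \<and> g w \<le> 1"
  shows "0 \<le> pot_step V E \<alpha> v g u \<and> pot_step V E \<alpha> v g u \<le> 1"
proof -
  let ?N = "nbrs V E u" and ?s = "(1 - \<alpha>) / real (card (nbrs V E u))"
  have "\<bar>?s * (\<Sum>w\<in>?N. g w)\<bar> \<le> 1 - \<alpha>"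
    using scaled_mean_abs_le[of "1 - \<alpha>" 1 ?N g] assms by simp
  then have "?s * (\<Sum>w\<in>?N. g w) \<le> 1" using assms(1) abs_ge_self[of "?s * (\<Sum>w\<in>?N. g w)"] by linarith
  moreover have "0 \<le> ?s * (\<Sum>w\<in>?N. g w)"
    using assms by (intro mult_nonneg_nonneg sum_nonneg) auto
  ultimately show ?thesis using assms(1) by (auto simp: pot_step_def)
qed

lemma pot_step_fixed_iff:
  assumes "v \<in> V"
  shows "pot_step V E \<alpha> v f = f \<longleftrightarrow>
           f v = 1 \<and>
           (\<forall>u\<in>V - {v}. f u = (1 - \<alpha>) / real (card (nbrs V E u)) * (\<Sum>w\<in>nbrs V E u. f w)) \<and>
           (\<forall>u. u \<notin> V \<longrightarrow> f u = 0)"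
proof
  assume fixed: "pot_step V E \<alpha> v f = f"
  show "f v = 1 \<and>
        (\<forall>u\<in>V - {v}. f u = (1 - \<alpha>) / real (card (nbrs V E u)) * (\<Sum>w\<in>nbrs V E u. f w)) \<and>
        (\<forall>u. u \<notin> V \<longrightarrow> f u = 0)"
    using fun_cong[OF fixed] assms unfolding pot_step_def by (metis DiffE insertCI)
next
  assume "f v = 1 \<and>
          (\<forall>u\<in>V - {v}. f u = (1 - \<alpha>) / real (card (nbrs V E u)) * (\<Sum>w\<in>nbrs V E u. f w)) \<and>
          (\<forall>u. u \<notin> V \<longrightarrow> f u = 0)"
  then show "pot_step V E \<alpha> v f = f"
    using assms unfolding fun_eq_iff pot_step_def by auto
qed

text \<open>On a finite vertex set the contraction property leaves room for only one fixed point.\<close>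
lemma pot_step_fixed_unique:
  assumes "finite V" and "0 < \<alpha>" and "\<alpha> < 1" and "v \<in> V"
    and f: "pot_step V E \<alpha> v f = f" and h: "pot_step V E \<alpha> v h = h"
  shows "f = h"
proof -
  let ?D = "insert 0 ((\<lambda>u. \<bar>f u - h u\<bar>) ` V)"
  define K where "K = Max ?D"
  have "finite ?D" using assms(1) by simp
  have outside: "f w = 0" "h w = 0" if "w \<notin> V" for w
    using that f h pot_step_fixed_iff[OF assms(4)] by metis+
  have K_bound: "\<bar>f w - h w\<bar> \<le> K" for w
    using \<open>finite ?D\<close> outside unfolding K_def by (cases "w \<in> V") (auto intro: Max_ge)
  have "K \<in> ?D" using \<open>finite ?D\<close> unfolding K_def by (intro Max_in) auto
  moreover have "\<bar>f w - h w\<bar> \<le> (1 - \<alpha>) * K" for w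
    using pot_step_contraction[of \<alpha> f h K V E v w] assms(3) K_bound f h by simp
  ultimately have "K \<le> (1 - \<alpha>) * K" by auto
  then have "K \<le> 0" using assms(2) by (simp add: algebra_simps mult_le_0_iff)
  show ?thesis
  proof
    fix w
    have "\<bar>f w - h w\<bar> \<le> 0" using K_bound[of w] \<open>K \<le> 0\<close> by linarith
    then show "f w = h w" by simp
  qed
qed

text \<open>A fixed point exists: the iterates from \<open>0\<close> converge because successive differences
  decay geometrically.\<close>
lemma pot_step_fixed_exists:
  assumes "0 < \<alpha>" and "\<alpha> < 1"
  shows "\<exists>f. pot_step V E \<alpha> v f = f \<and> (\<forall>u. 0 \<le> f u \<and> f u \<le> 1)"
proof -
  let ?T = "pot_step V E \<alpha> v"
  define it where "it n = (?T ^^ n) (\<lambda>_. 0)" for n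
  have it_unit: "0 \<le> it n u \<and> it n u \<le> 1" for n u
  proof (induction n arbitrary: u)
    case (Suc n)
    then show ?case using assms pot_step_unit_interval[of \<alpha> "it n"] by (simp add: it_def)
  qed (simp add: it_def)
  have it_step: "\<bar>it (Suc n) u - it n u\<bar> \<le> (1 - \<alpha>) ^ n" for n u
  proof (induction n arbitrary: u)
    case 0
    then show ?case using it_unit[of 1 u] by (simp add: it_def)
  next
    case (Suc n)
    then show ?case
      using pot_step_contraction[of \<alpha> "it (Suc n)" "it n" "(1 - \<alpha>) ^ n" V E v u] assms
      by (simp add: it_def)
  qed
  define L where "L u = (\<Sum>n. it (Suc n) u - it n u)" for u
  have it_lim: "(\<lambda>n. it n u) \<longlonglongrightarrow> L u" for u
  proof -
    have "summable (\<lambda>n. it (Suc n) u - it n u)"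
      using assms it_step by (intro summable_comparison_test'[OF summable_geometric, of "1 - \<alpha>" 0]) auto
    then have "(\<lambda>m. \<Sum>n<m. it (Suc n) u - it n u) \<longlonglongrightarrow> L u"
      unfolding L_def by (rule summable_LIMSEQ)
    then show ?thesis unfolding sum_lessThan_telescope[of "\<lambda>n. it n u"] by (simp add: it_def)
  qed
  have T_lim: "(\<lambda>n. ?T (it n) u) \<longlonglongrightarrow> ?T L u" for u
  proof -
    have "(\<lambda>n. \<Sum>w\<in>nbrs V E u. it n w) \<longlonglongrightarrow> (\<Sum>w\<in>nbrs V E u. L w)"
      by (intro tendsto_sum it_lim)
    from tendsto_mult_left[OF this, of "(1 - \<alpha>) / real (card (nbrs V E u))"] show ?thesis
      by (cases "u = v"; cases "u \<in> V") (simp_all add: pot_step_def)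
  qed
  have T_lim': "(\<lambda>n. ?T (it n) u) \<longlonglongrightarrow> L u" for u
    using LIMSEQ_Suc[OF it_lim[of u]] by (simp add: it_def)
  have "?T L = L"
    using LIMSEQ_unique[OF T_lim T_lim'] by (rule ext)
  moreover have "0 \<le> L u \<and> L u \<le> 1" for u
  proof
    show "0 \<le> L u" by (rule LIMSEQ_le_const[OF it_lim]) (use it_unit in blast)
    show "L u \<le> 1" by (rule LIMSEQ_le_const2[OF it_lim]) (use it_unit in blast)
  qed
  ultimately show ?thesis by blast
qed

lemma phi_fixed_point:
  assumes "finite V" and "0 < \<alpha>" and "\<alpha> < 1" and "v \<in> V"
  shows "pot_step V E \<alpha> v (phi V E \<alpha> v) = phi V E \<alpha> v"
    and "0 \<le> phi V E \<alpha> v u" and "phi V E \<alpha> v u \<le> 1"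
proof -
  obtain f where f: "pot_step V E \<alpha> v f = f" "\<forall>u. 0 \<le> f u \<and> f u \<le> 1"
    using pot_step_fixed_exists[OF assms(2,3), of V E v] by blast
  have phi_eq: "phi V E \<alpha> v = f"
    unfolding phi_def
  proof (rule the_equality)
    show "f v = 1 \<and>
          (\<forall>u\<in>V - {v}. f u = (1 - \<alpha>) / real (card (nbrs V E u)) * (\<Sum>w\<in>nbrs V E u. f w)) \<and>
          (\<forall>u. u \<notin> V \<longrightarrow> f u = 0)"
      using f(1) unfolding pot_step_fixed_iff[OF assms(4)] .
    fix g
    assume "g v = 1 \<and>
            (\<forall>u\<in>V - {v}. g u = (1 - \<alpha>) / real (card (nbrs V E u)) * (\<Sum>w\<in>nbrs V E u. g w)) \<and>
            (\<forall>u. u \<notin> V \<longrightarrow> g u = 0)"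
    then have "pot_step V E \<alpha> v g = g" unfolding pot_step_fixed_iff[OF assms(4)] .
    then show "g = f" by (rule pot_step_fixed_unique[OF assms _ f(1)])
  qed
  show "pot_step V E \<alpha> v (phi V E \<alpha> v) = phi V E \<alpha> v"
    unfolding phi_eq by (rule f(1))
  show "0 \<le> phi V E \<alpha> v u" and "phi V E \<alpha> v u \<le> 1"
    unfolding phi_eq using f(2) by blast+
qed

text \<open>Maximum principle: on a finite set \<open>T\<close> avoiding \<open>v\<close>, whose neighbours outside \<open>T\<close> have
  values at most \<open>b \<ge> 0\<close>, a fixed point is bounded by \<open>b\<close>; at a maximiser in \<open>T\<close> the value
  is at most \<open>1 - \<alpha>\<close> times the maximum.\<close>
lemma pot_fixed_point_max_principle:
  assumes "0 < \<alpha>" and "\<alpha> < 1" and fixed: "pot_step V E \<alpha> v f = f"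
    and "finite T" and T_sub: "T \<subseteq> V - {v}" and "0 \<le> b"
    and exits: "\<And>u w. u \<in> T \<Longrightarrow> w \<in> nbrs V E u \<Longrightarrow> w \<in> T \<or> f w \<le> b"
    and "u \<in> T"
  shows "f u \<le> b"
proof -
  define M where "M = Max (f ` T)"
  have le_M: "f w \<le> M" if "w \<in> T" for w
    unfolding M_def using \<open>finite T\<close> that by (intro Max_ge) auto
  have "M \<in> f ` T" unfolding M_def using \<open>finite T\<close> \<open>u \<in> T\<close> by (intro Max_in) auto
  then obtain u0 where "u0 \<in> T" and u0_max: "f u0 = M" by blast
  have "M \<le> b"
  proof (rule ccontr)
    assume "\<not> M \<le> b"
    let ?N = "nbrs V E u0"
    have nbrs_le: "f w \<le> M" if "w \<in> ?N" for w
      using exits[OF \<open>u0 \<in> T\<close> that] le_M \<open>\<not> M \<le> b\<close> by fastforce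
    have "f u0 = (1 - \<alpha>) / real (card ?N) * (\<Sum>w\<in>?N. f w)"
    proof -
      have "u0 \<in> V" "u0 \<noteq> v" using \<open>u0 \<in> T\<close> T_sub by auto
      then show ?thesis using fun_cong[OF fixed, of u0] by (simp add: pot_step_def)
    qed
    also have "\<dots> \<le> (1 - \<alpha>) * M"
    proof (cases "card ?N = 0")
      case False
      have "(\<Sum>w\<in>?N. f w) \<le> real (card ?N) * M" using nbrs_le by (rule sum_bounded_above)
      then have "(1 - \<alpha>) / real (card ?N) * (\<Sum>w\<in>?N. f w) \<le> (1 - \<alpha>) / real (card ?N) * (real (card ?N) * M)"
        using \<open>\<alpha> < 1\<close> by (intro mult_left_mono) auto
      with False show ?thesis by simp
    qed (use \<open>\<alpha> < 1\<close> \<open>\<not> M \<le> b\<close> \<open>0 \<le> b\<close> in simp)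
    finally have "\<alpha> * M \<le> 0" using u0_max by (simp add: algebra_simps)
    then show False using \<open>0 < \<alpha>\<close> \<open>\<not> M \<le> b\<close> \<open>0 \<le> b\<close> by (simp add: mult_le_0_iff)
  qed
  then show ?thesis using le_M[OF \<open>u \<in> T\<close>] by linarith
qed

section \<open>Branches of a tree rooted at \<open>v\<close>\<close>

definition avoiding :: "('a \<Rightarrow> 'a \<Rightarrow> bool) \<Rightarrow> 'a \<Rightarrow> 'a \<Rightarrow> 'a \<Rightarrow> bool" where
  "avoiding E v a b \<longleftrightarrow> E a b \<and> a \<noteq> v \<and> b \<noteq> v"

lemma subtree_avoiding: "subtree E v i = {u. (avoiding E v)\<^sup>*\<^sup>* i u}"
  by (simp add: subtree_def avoiding_def[abs_def])

lemma rtranclp_simple_path: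
  assumes "R\<^sup>*\<^sup>* a b"
  shows "\<exists>ps. ps \<noteq> [] \<and> hd ps = a \<and> last ps = b \<and> distinct ps \<and>
              (\<forall>k. Suc k < length ps \<longrightarrow> R (ps ! k) (ps ! Suc k))"
  using assms
proof (induction rule: rtranclp_induct)
  case base
  show ?case by (intro exI[of _ "[a]"]) auto
next
  case (step b c)
  then obtain ps where ps: "ps \<noteq> []" "hd ps = a" "last ps = b" "distinct ps"
    and steps: "\<forall>k. Suc k < length ps \<longrightarrow> R (ps ! k) (ps ! Suc k)" by blast
  show ?case
  proof (cases "c \<in> set ps")
    case True
    then obtain k where k: "k < length ps" "ps ! k = c" by (meson in_set_conv_nth)
    let ?qs = "take (Suc k) ps"
    have "?qs \<noteq> []" "hd ?qs = a" "distinct ?qs" using ps by (auto simp: hd_take)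
    moreover have "last ?qs = c" using k by (simp add: take_Suc_conv_app_nth)
    moreover have "\<forall>k'. Suc k' < length ?qs \<longrightarrow> R (?qs ! k') (?qs ! Suc k')" using steps by simp
    ultimately show ?thesis by blast
  next
    case False
    have "\<forall>k. Suc k < length (ps @ [c]) \<longrightarrow> R ((ps @ [c]) ! k) ((ps @ [c]) ! Suc k)"
    proof (intro allI impI)
      fix k assume k: "Suc k < length (ps @ [c])"
      show "R ((ps @ [c]) ! k) ((ps @ [c]) ! Suc k)"
      proof (cases "Suc k < length ps")
        case True
        then show ?thesis using steps by (simp add: nth_append)
      next
        case False
        then have "k = length ps - 1" using k by simp
        then show ?thesis using ps(1,3) step(2) by (simp add: nth_append last_conv_nth)
      qed
    qed
    then show ?thesis using ps False by (intro exI[of _ "ps @ [c]"]) auto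
  qed
qed

locale rooted_tree =
  fixes V :: "'a set" and E :: "'a \<Rightarrow> 'a \<Rightarrow> bool" and v :: 'a
  assumes tree: "tree V E" and root_in_V: "v \<in> V"
begin

abbreviation \<Gamma> :: "'a set" where "\<Gamma> \<equiv> nbrs V E v"
abbreviation W :: "'a set" where "W \<equiv> W_set V E v"

lemma graph: "graph V E"
  using tree unfolding tree_def by blast

lemma finite_V: "finite V"
  using graph unfolding graph_def by blast

lemma edge_sym: "E a b \<Longrightarrow> E b a"
  and edge_in_V: "E a b \<Longrightarrow> a \<in> V \<and> b \<in> V"
  and edge_irrefl: "E a b \<Longrightarrow> a \<noteq> b"
  using graph unfolding graph_def by blast+

lemma finite_W: "finite W"
  using finite_V unfolding W_set_def by simp

lemma finite_\<Gamma>: "finite \<Gamma>"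
  using finite_V unfolding nbrs_def by simp

lemma card_V_split: "card V = 1 + card \<Gamma> + card W"
proof -
  have V_eq: "V = insert v (\<Gamma> \<union> W)" and "v \<notin> \<Gamma> \<union> W" "\<Gamma> \<inter> W = {}"
    using root_in_V edge_irrefl unfolding W_set_def nbrs_def by auto
  have "card (insert v (\<Gamma> \<union> W)) = 1 + card \<Gamma> + card W"
    using finite_\<Gamma> finite_W \<open>v \<notin> \<Gamma> \<union> W\<close> \<open>\<Gamma> \<inter> W = {}\<close> by (simp add: card_Un_disjoint)
  then show ?thesis unfolding V_eq[symmetric] .
qed

lemma nbrs_root_nonempty:
  assumes "2 \<le> card V"
  shows "\<Gamma> \<noteq> {}"
proof -
  have "card (V - {v}) \<noteq> 0" using assms root_in_V finite_V by simp
  then have "V - {v} \<noteq> {}" by (metis card.empty)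
  then obtain w where "w \<in> V" "w \<noteq> v" by blast
  then have "E\<^sup>*\<^sup>* v w"
    using tree root_in_V unfolding tree_def connected_graph_def by blast
  then obtain y where "E v y" using \<open>w \<noteq> v\<close> by (blast elim: converse_rtranclpE)
  then show ?thesis using edge_in_V unfolding nbrs_def by blast
qed

lemma avoiding_sym: "(avoiding E v)\<^sup>*\<^sup>* a b \<Longrightarrow> (avoiding E v)\<^sup>*\<^sup>* b a"
  using symp_rtranclp[of "avoiding E v"] edge_sym
  by (metis avoiding_def sympD sympI)

lemma subtree_subset_V:
  assumes "i \<in> \<Gamma>"
  shows "subtree E v i \<subseteq> V"
proof
  fix u assume "u \<in> subtree E v i"
  then have "(avoiding E v)\<^sup>*\<^sup>* i u" unfolding subtree_avoiding by simp
  then show "u \<in> V"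
    using assms by (induction rule: rtranclp_induct) (auto simp: avoiding_def nbrs_def dest: edge_in_V)
qed

text \<open>Two distinct neighbours of the root cannot be joined by a path avoiding the root:
  together with the root such a path would close a cycle.\<close>
lemma no_avoiding_path_between_nbrs:
  assumes "i \<in> \<Gamma>" and "j \<in> \<Gamma>" and "i \<noteq> j" and "(avoiding E v)\<^sup>*\<^sup>* i j"
  shows False
proof -
  obtain ps where ps: "ps \<noteq> []" "hd ps = i" "last ps = j" "distinct ps"
    and steps: "\<forall>k. Suc k < length ps \<longrightarrow> avoiding E v (ps ! k) (ps ! Suc k)"
    using rtranclp_simple_path[OF assms(4)] by blast
  have "E v i" "E v j" using assms(1,2) unfolding nbrs_def by auto
  have "length ps \<noteq> 1"
  proof
    assume "length ps = 1"
    then have "hd ps = last ps" by (cases ps) auto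
    with ps assms(3) show False by simp
  qed
  moreover have "length ps \<noteq> 0" using ps(1) by simp
  ultimately have "2 \<le> length ps" by linarith
  have not_root: "x \<noteq> v" if x_in: "x \<in> set ps" for x
  proof -
    obtain k where "k < length ps" "ps ! k = x" using x_in by (meson in_set_conv_nth)
    then show ?thesis
      using steps ps(1,2) edge_irrefl[OF \<open>E v i\<close>] \<open>2 \<le> length ps\<close>
      by (cases k) (auto simp: avoiding_def hd_conv_nth)
  qed
  have "is_cycle E (v # ps)"
    unfolding is_cycle_def
  proof (intro conjI allI impI)
    show "3 \<le> length (v # ps)" using \<open>2 \<le> length ps\<close> by simp
    show "distinct (v # ps)" using ps(4) not_root by auto
    show "E (last (v # ps)) (hd (v # ps))" using ps(1,3) edge_sym[OF \<open>E v j\<close>] by simp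
    fix k assume "Suc k < length (v # ps)"
    then show "E ((v # ps) ! k) ((v # ps) ! Suc k)"
      using \<open>E v i\<close> ps(1,2) steps by (cases k) (auto simp: hd_conv_nth avoiding_def)
  qed
  then show False using tree unfolding tree_def by blast
qed

lemma subtree_disjoint:
  assumes "i \<in> \<Gamma>" and "j \<in> \<Gamma>" and "u \<in> subtree E v i" and "u \<in> subtree E v j"
  shows "i = j"
proof (rule ccontr)
  assume "i \<noteq> j"
  have "(avoiding E v)\<^sup>*\<^sup>* i u" "(avoiding E v)\<^sup>*\<^sup>* u j"
    using assms(3,4) avoiding_sym unfolding subtree_avoiding by auto
  then show False
    using no_avoiding_path_between_nbrs[OF assms(1,2) \<open>i \<noteq> j\<close>] by (meson rtranclp_trans)
qed

lemma W_in_subtree: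
  assumes "u \<in> W"
  shows "\<exists>i\<in>\<Gamma>. u \<in> subtree E v i - {i}"
proof -
  have "E\<^sup>*\<^sup>* v u" using tree root_in_V assms unfolding tree_def connected_graph_def W_set_def by blast
  then have "u = v \<or> (\<exists>i\<in>\<Gamma>. (avoiding E v)\<^sup>*\<^sup>* i u)"
  proof (induction rule: rtranclp_induct)
    case (step b c)
    show ?case
    proof (cases "b = v")
      case True
      then have "c \<in> \<Gamma>" using step(2) edge_in_V unfolding nbrs_def by auto
      then show ?thesis by blast
    next
      case False
      then show ?thesis using step by (auto simp: avoiding_def intro: rtranclp.rtrancl_into_rtrancl)
    qed
  qed simp
  moreover have "u \<noteq> v" "u \<notin> \<Gamma>" using assms unfolding W_set_def by auto
  ultimately show ?thesis unfolding subtree_avoiding by auto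
qed

definition branch :: "'a \<Rightarrow> 'a" where
  "branch u = (THE i. i \<in> \<Gamma> \<and> u \<in> subtree E v i - {i})"

lemma branch:
  assumes "u \<in> W"
  shows "branch u \<in> \<Gamma>" and "u \<in> subtree E v (branch u) - {branch u}"
proof -
  have "\<exists>!i. i \<in> \<Gamma> \<and> u \<in> subtree E v i - {i}"
    using W_in_subtree[OF assms] subtree_disjoint by blast
  from theI'[OF this] show "branch u \<in> \<Gamma>" and "u \<in> subtree E v (branch u) - {branch u}"
    unfolding branch_def by blast+
qed

lemma branch_iff:
  assumes "u \<in> W" and "i \<in> \<Gamma>"
  shows "u \<in> subtree E v i - {i} \<longleftrightarrow> branch u = i"
proof
  assume "u \<in> subtree E v i - {i}"
  then show "branch u = i"
    using subtree_disjoint[OF branch(1)[OF assms(1)] assms(2)] branch(2)[OF assms(1)] by blast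
next
  assume "branch u = i"
  then show "u \<in> subtree E v i - {i}" using branch(2)[OF assms(1)] by simp
qed

lemma branch_exits:
  assumes "j \<in> \<Gamma>" and "u \<in> subtree E v j \<inter> W" and "w \<in> nbrs V E u"
  shows "w \<in> subtree E v j \<inter> W \<or> w = j"
proof -
  have "E u w" "w \<in> V" "u \<noteq> v" "u \<notin> \<Gamma>" using assms(2,3) unfolding nbrs_def W_set_def by auto
  have "w \<noteq> v" using \<open>E u w\<close> \<open>u \<notin> \<Gamma>\<close> edge_sym edge_in_V unfolding nbrs_def by blast
  then have "w \<in> subtree E v j"
    using assms(2) \<open>E u w\<close> \<open>u \<noteq> v\<close> unfolding subtree_avoiding
    by (auto simp: avoiding_def intro: rtranclp.rtrancl_into_rtrancl)
  moreover have "w = j" if "w \<in> \<Gamma>"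
    using subtree_disjoint[OF that assms(1) _ \<open>w \<in> subtree E v j\<close>] by (simp add: subtree_def)
  ultimately show ?thesis using \<open>w \<in> V\<close> \<open>w \<noteq> v\<close> unfolding W_set_def by blast
qed

text \<open>Potentials do not increase when moving from a neighbour of the root deeper into its
  subtree; this is the maximum principle applied to the part of W below that neighbour.\<close>
lemma phi_le_branch:
  assumes "0 < \<alpha>" and "\<alpha> < 1" and "u \<in> W"
  shows "phi V E \<alpha> v u \<le> phi V E \<alpha> v (branch u)"
proof -
  let ?j = "branch u" and ?f = "phi V E \<alpha> v"
  note fixed = phi_fixed_point[OF finite_V assms(1,2) root_in_V]
  show ?thesis
  proof (rule pot_fixed_point_max_principle[OF assms(1,2) fixed(1)])
    show "finite (subtree E v ?j \<inter> W)" using finite_W by simp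
    show "subtree E v ?j \<inter> W \<subseteq> V - {v}" unfolding W_set_def by auto
    show "0 \<le> ?f ?j" by (rule fixed(2))
    show "u \<in> subtree E v ?j \<inter> W" using branch[OF assms(3)] assms(3) by blast
    show "w \<in> subtree E v ?j \<inter> W \<or> ?f w \<le> ?f ?j" if "x \<in> subtree E v ?j \<inter> W" "w \<in> nbrs V E x" for x w
      using branch_exits[OF branch(1)[OF assms(3)] that] by auto
  qed
qed

end

section \<open>The exchange argument\<close>

definition pr_denominator ::
  "('a \<Rightarrow> real) \<Rightarrow> ('a \<Rightarrow> real) \<Rightarrow> ('a \<Rightarrow> 'a) \<Rightarrow> 'a set \<Rightarrow> 'a set \<Rightarrow> real" where
  "pr_denominator c e r X Y = (\<Sum>i\<in>X. 1 - c i) + (\<Sum>u\<in>Y. 1 - e u * ind X (r u))"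

definition pr_ratio ::
  "('a \<Rightarrow> real) \<Rightarrow> ('a \<Rightarrow> real) \<Rightarrow> ('a \<Rightarrow> real) \<Rightarrow> ('a \<Rightarrow> 'a) \<Rightarrow> 'a set \<Rightarrow> 'a set \<Rightarrow> real" where
  "pr_ratio a c e r X Y = (\<Sum>i\<in>X. a i) / pr_denominator c e r X Y"

lemma ind_le_1: "ind X x \<le> 1"
  by (simp add: ind_def)

locale prefix_exchange =
  fixes G W :: "'a set" and a c e :: "'a \<Rightarrow> real" and r :: "'a \<Rightarrow> 'a" and ws :: "'a list"
  assumes finite_G: "finite G"
    and ws_distinct: "distinct ws" and ws_set: "set ws = W"
    and ws_sorted: "sorted_wrt (\<lambda>x y. e x \<ge> e y) ws"
    and a_nonneg: "\<And>i. i \<in> G \<Longrightarrow> 0 \<le> a i"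
    and c_nonneg: "\<And>i. i \<in> G \<Longrightarrow> 0 \<le> c i"
    and c_less_1: "\<And>i. i \<in> G \<Longrightarrow> c i < 1"
    and e_nonneg: "\<And>u. u \<in> W \<Longrightarrow> 0 \<le> e u"
    and r_in_G: "\<And>u. u \<in> W \<Longrightarrow> r u \<in> G"
    and e_le_c: "\<And>u. u \<in> W \<Longrightarrow> e u \<le> c (r u)"
begin

abbreviation den :: "'a set \<Rightarrow> 'a set \<Rightarrow> real" where "den \<equiv> pr_denominator c e r"
abbreviation ratio :: "'a set \<Rightarrow> 'a set \<Rightarrow> real" where "ratio \<equiv> pr_ratio a c e r"
abbreviation prefix :: "nat \<Rightarrow> 'a set" where "prefix k \<equiv> set (take k ws)"

lemma finite_W: "finite W"
  unfolding ws_set[symmetric] by (rule finite_set)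

lemma card_W: "card W = length ws"
  unfolding ws_set[symmetric] by (rule distinct_card[OF ws_distinct])

lemma card_prefix: "k \<le> card W \<Longrightarrow> card (prefix k) = k"
  using ws_distinct card_W by (simp add: distinct_card)

lemma prefix_subset: "prefix k \<subseteq> W"
  unfolding ws_set[symmetric] by (rule set_take_subset)

lemma prefix_sorted:
  assumes "u \<in> prefix k" and "y \<in> W" and "y \<notin> prefix k"
  shows "e y \<le> e u"
proof -
  have "set ws = set (take k ws) \<union> set (drop k ws)" by (metis append_take_drop_id set_append)
  then have "y \<in> set (drop k ws)" using assms(2,3) ws_set by blast
  moreover have "sorted_wrt (\<lambda>x y. e x \<ge> e y) (take k ws @ drop k ws)"
    using ws_sorted by simp
  ultimately show ?thesis using assms(1) unfolding sorted_wrt_append by blast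
qed

text \<open>The denominator is positive on feasible pairs: every chosen neighbour contributes
  \<open>1 - c i > 0\<close> and every other term is nonnegative because \<open>e u \<le> c (r u) < 1\<close>.\<close>
lemma den_pos:
  assumes "X \<subseteq> G" and "X \<noteq> {}" and "Y \<subseteq> W"
  shows "0 < den X Y"
proof -
  have "finite X" using assms(1) finite_G finite_subset by blast
  then have "0 < (\<Sum>i\<in>X. 1 - c i)"
    using assms(1,2) c_less_1 by (intro sum_pos) auto
  moreover have "0 \<le> 1 - e u * ind X (r u)" if "u \<in> Y" for u
  proof -
    have "e u < 1" using that assms(3) e_le_c c_less_1 r_in_G by fastforce
    then show ?thesis by (simp add: ind_def)
  qed
  then have "0 \<le> (\<Sum>u\<in>Y. 1 - e u * ind X (r u))" by (rule sum_nonneg)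
  ultimately show ?thesis unfolding pr_denominator_def by linarith
qed

lemma ratio_mono:
  assumes "X' \<subseteq> G" and "X' \<noteq> {}" and "Y' \<subseteq> W"
    and "(\<Sum>i\<in>X. a i) \<le> (\<Sum>i\<in>X'. a i)" and "den X' Y' \<le> den X Y"
  shows "ratio X Y \<le> ratio X' Y'"
proof -
  have "0 \<le> (\<Sum>i\<in>X'. a i)" using assms(1) a_nonneg by (intro sum_nonneg) auto
  from frac_le[OF this assms(4) den_pos[OF assms(1-3)] assms(5)] show ?thesis
    unfolding pr_ratio_def .
qed

lemma den_grow:
  assumes "X \<subseteq> G" and "j \<in> G" and "j \<notin> X" and "Y \<subseteq> W" and "y \<in> Y"
    and trade: "e y * ind X (r y) \<le> c j"
  shows "den (insert j X) (Y - {y}) \<le> den X Y"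
proof -
  have "finite X" using assms(1) finite_G finite_subset by blast
  have "finite Y" using assms(4) finite_W finite_subset by blast
  have "(\<Sum>u\<in>Y - {y}. 1 - e u * ind (insert j X) (r u)) \<le> (\<Sum>u\<in>Y - {y}. 1 - e u * ind X (r u))"
    using assms(4) e_nonneg by (intro sum_mono) (auto simp: ind_def)
  moreover have "(\<Sum>u\<in>Y. 1 - e u * ind X (r u)) = (1 - e y * ind X (r y)) + (\<Sum>u\<in>Y - {y}. 1 - e u * ind X (r u))"
    using \<open>finite Y\<close> assms(5) by (rule sum.remove)
  moreover have "(\<Sum>i\<in>insert j X. 1 - c i) = (1 - c j) + (\<Sum>i\<in>X. 1 - c i)"
    using \<open>finite X\<close> assms(3) by simp
  ultimately show ?thesis using trade unfolding pr_denominator_def by linarith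
qed

lemma den_swap:
  assumes "Y \<subseteq> W" and "y \<in> Y" and "u \<notin> Y"
    and trade: "e y * ind X (r y) \<le> e u * ind X (r u)"
  shows "den X (insert u (Y - {y})) \<le> den X Y"
proof -
  have "finite Y" using assms(1) finite_W finite_subset by blast
  have "(\<Sum>w\<in>Y. 1 - e w * ind X (r w)) = (1 - e y * ind X (r y)) + (\<Sum>w\<in>Y - {y}. 1 - e w * ind X (r w))"
    using \<open>finite Y\<close> assms(2) by (rule sum.remove)
  moreover have "(\<Sum>w\<in>insert u (Y - {y}). 1 - e w * ind X (r w))
      = (1 - e u * ind X (r u)) + (\<Sum>w\<in>Y - {y}. 1 - e w * ind X (r w))"
    using \<open>finite Y\<close> assms(3) by simp
  ultimately show ?thesis using trade unfolding pr_denominator_def by linarith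
qed

text \<open>Termination measure for the exchange argument: first the size of \<open>Y\<close>, then the number
  of elements of \<open>Y\<close> outside the prefix of the same size.\<close>
definition rank :: "'a set \<Rightarrow> nat" where
  "rank Y = card Y * (card W + 1) + card (Y - prefix (card Y))"

lemma rank_remove:
  assumes "Y \<subseteq> W" and "y \<in> Y"
  shows "rank (Y - {y}) < rank Y"
proof -
  have "finite Y" using assms(1) finite_W finite_subset by blast
  then have "card Y = Suc (card (Y - {y}))" using assms(2) by (rule card.remove)
  moreover have "card (Y - {y} - prefix (card (Y - {y}))) \<le> card W"
    using assms(1) finite_W by (intro card_mono) auto
  ultimately show ?thesis unfolding rank_def by simp
qed

lemma rank_swap:
  assumes "Y \<subseteq> W" and "y \<in> Y" and "y \<notin> prefix (card Y)"
    and "u \<in> prefix (card Y)" and "u \<notin> Y"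
  shows "rank (insert u (Y - {y})) < rank Y"
proof -
  have "finite Y" using assms(1) finite_W finite_subset by blast
  then have card_eq: "card (insert u (Y - {y})) = card Y"
    using assms(5) card.remove[OF \<open>finite Y\<close> assms(2)] by simp
  have "insert u (Y - {y}) - prefix (card Y) = (Y - prefix (card Y)) - {y}"
    using assms(4) by auto
  moreover have "card ((Y - prefix (card Y)) - {y}) < card (Y - prefix (card Y))"
    using \<open>finite Y\<close> assms(2,3) by (intro card_Diff1_less) auto
  ultimately show ?thesis unfolding rank_def card_eq by simp
qed

lemma exists_misplaced:
  assumes "Y \<subseteq> W" and "Y \<noteq> prefix (card Y)"
  obtains y u where "y \<in> Y" "y \<notin> prefix (card Y)" "u \<in> prefix (card Y)" "u \<notin> Y"
proof -
  have "finite Y" using assms(1) finite_W finite_subset by blast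
  have "card Y \<le> card W" using finite_W assms(1) by (rule card_mono)
  then have card_eq: "card (prefix (card Y)) = card Y" by (rule card_prefix)
  have "\<not> Y \<subseteq> prefix (card Y)"
    using card_subset_eq[of "prefix (card Y)" Y] assms(2) card_eq by auto
  moreover have "\<not> prefix (card Y) \<subseteq> Y"
    using card_subset_eq[of Y "prefix (card Y)"] \<open>finite Y\<close> assms(2) card_eq by auto
  ultimately show ?thesis using that by blast
qed

theorem exchange_to_prefix:
  assumes "X \<subseteq> G" and "X \<noteq> {}" and "Y \<subseteq> W"
  shows "\<exists>X' k. X' \<subseteq> G \<and> X' \<noteq> {} \<and> k \<le> card W \<and> card X' + k = card X + card Y \<and>
                ratio X Y \<le> ratio X' (prefix k)"
  using assms
proof (induction "rank Y" arbitrary: X Y rule: less_induct)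
  case less
  have "finite X" using less.prems(1) finite_G finite_subset by blast
  have "finite Y" using less.prems(3) finite_W finite_subset by blast
  have by_IH: ?case
    if step: "X1 \<subseteq> G" "X1 \<noteq> {}" "Y1 \<subseteq> W" "rank Y1 < rank Y"
       "card X1 + card Y1 = card X + card Y" "ratio X Y \<le> ratio X1 Y1" for X1 Y1
  proof -
    obtain X' k where "X' \<subseteq> G" "X' \<noteq> {}" "k \<le> card W" "card X' + k = card X1 + card Y1"
      and "ratio X1 Y1 \<le> ratio X' (prefix k)"
      using less.hyps[OF step(4,1-3)] by blast
    then show ?case using step(5,6) by (intro exI[of _ X'] exI[of _ k]) auto
  qed
  show ?case
  proof (cases "Y = prefix (card Y)")
    case True
    then show ?thesis
      using less.prems finite_W by (intro exI[of _ X] exI[of _ "card Y"]) (auto intro: card_mono)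
  next
    case False
    then obtain y u where y: "y \<in> Y" "y \<notin> prefix (card Y)" and u: "u \<in> prefix (card Y)" "u \<notin> Y"
      using exists_misplaced less.prems(3) by blast
    have "u \<in> W" using u(1) prefix_subset by blast
    have "e y * ind X (r y) \<le> e u"
    proof -
      have "e y \<le> e u" using prefix_sorted u(1) y less.prems(3) by blast
      moreover have "0 \<le> e y" using e_nonneg y(1) less.prems(3) by blast
      then have "e y * ind X (r y) \<le> e y" by (rule mult_left_le[OF ind_le_1])
      ultimately show ?thesis by linarith
    qed
    show ?thesis
    proof (cases "r u \<in> X")
      case False
      let ?X1 = "insert (r u) X" and ?Y1 = "Y - {y}"
      have "r u \<in> G" using r_in_G[OF \<open>u \<in> W\<close>] .
      have "den ?X1 ?Y1 \<le> den X Y"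
        using less.prems(1,3) \<open>r u \<in> G\<close> False y(1) \<open>e y * ind X (r y) \<le> e u\<close> e_le_c[OF \<open>u \<in> W\<close>]
        by (intro den_grow) auto
      moreover have "(\<Sum>i\<in>X. a i) \<le> (\<Sum>i\<in>?X1. a i)"
        using \<open>finite X\<close> False a_nonneg[OF \<open>r u \<in> G\<close>] by simp
      ultimately have ratio_le: "ratio X Y \<le> ratio ?X1 ?Y1"
        using less.prems \<open>r u \<in> G\<close> by (intro ratio_mono) auto
      have card_eq: "card ?X1 + card ?Y1 = card X + card Y"
        using \<open>finite X\<close> False card.remove[OF \<open>finite Y\<close> y(1)] by simp
      have "?X1 \<subseteq> G" "?Y1 \<subseteq> W" using less.prems(1,3) \<open>r u \<in> G\<close> by auto
      from by_IH[OF this(1) _ this(2) rank_remove[OF less.prems(3) y(1)] card_eq ratio_le]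
      show ?thesis by simp
    next
      case True
      let ?Y1 = "insert u (Y - {y})"
      have "den X ?Y1 \<le> den X Y"
        using less.prems(3) y(1) u(2) \<open>e y * ind X (r y) \<le> e u\<close> True
        by (intro den_swap) (auto simp: ind_def)
      then have ratio_le: "ratio X Y \<le> ratio X ?Y1"
        using less.prems \<open>u \<in> W\<close> by (intro ratio_mono) auto
      have "card X + card ?Y1 = card X + card Y"
        using \<open>finite Y\<close> u(2) card.remove[OF \<open>finite Y\<close> y(1)] by simp
      moreover have "?Y1 \<subseteq> W" using less.prems(3) \<open>u \<in> W\<close> by auto
      ultimately show ?thesis
        using by_IH[OF less.prems(1,2) _ rank_swap[OF less.prems(3) y u] _ ratio_le] by blast
    qed
  qed
qed

end

section \<open>The objective as a ratio and the main theorem\<close>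

lemma sum_times_ind:
  assumes "finite A"
  shows "(\<Sum>i\<in>A. f i * ind X i) = (\<Sum>i\<in>A \<inter> X. f i)"
  unfolding sum.inter_restrict[OF assms] by (rule sum.cong) (auto simp: ind_def)

lemma sum_ind:
  assumes "finite A" and "X \<subseteq> A"
  shows "(\<Sum>i\<in>A. ind X i) = real (card X)"
  using sum_times_ind[OF assms(1), of "\<lambda>_. 1" X] assms(2) by (simp add: Int_absorb1)

lemma Max_eq_dominating_subset:
  fixes A B :: "'a::linorder set"
  assumes "finite A" and "B \<subseteq> A" and "B \<noteq> {}" and dom: "\<And>x. x \<in> A \<Longrightarrow> \<exists>y\<in>B. x \<le> y"
  shows "Max A = Max B"
proof (rule antisym)
  have "finite B" using assms(2,1) by (rule finite_subset)
  have "Max A \<in> A" using assms(1-3) by (intro Max_in) auto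
  then obtain y where "y \<in> B" "Max A \<le> y" using dom by blast
  then show "Max A \<le> Max B" using \<open>finite B\<close> by (meson Max_ge order_trans)
  show "Max B \<le> Max A" using assms(2,3,1) by (rule Max_mono)
qed

context rooted_tree
begin

lemma subtree_sum:
  assumes "i \<in> \<Gamma>" and "Y \<subseteq> W"
  shows "(\<Sum>u\<in>subtree E v i - {i}. g i u * ind Y u) = (\<Sum>u\<in>{u \<in> Y. branch u = i}. g (branch u) u)"
proof -
  have "finite (subtree E v i - {i})"
    using subtree_subset_V[OF assms(1)] finite_V by (meson Diff_subset finite_subset)
  then have "(\<Sum>u\<in>subtree E v i - {i}. g i u * ind Y u) = (\<Sum>u\<in>(subtree E v i - {i}) \<inter> Y. g i u)"
    by (rule sum_times_ind)
  also have "(subtree E v i - {i}) \<inter> Y = {u \<in> Y. branch u = i}"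
    using branch_iff[OF _ assms(1)] assms(2) by blast
  also have "(\<Sum>u\<in>{u \<in> Y. branch u = i}. g i u) = (\<Sum>u\<in>{u \<in> Y. branch u = i}. g (branch u) u)"
    by (rule sum.cong) auto
  finally show ?thesis .
qed

lemma F_as_ratio:
  assumes X: "X \<subseteq> \<Gamma>" and Y: "Y \<subseteq> W"
  shows "F V E \<alpha> q v (ind X) (ind Y) = real (card X + card Y) *
           pr_ratio (a_const V E \<alpha> q v) (c_const V E \<alpha> v) (e_const V E \<alpha> v) branch X Y"
proof -
  let ?a = "a_const V E \<alpha> q v" and ?c = "c_const V E \<alpha> v" and ?e = "e_const V E \<alpha> v"
  have "finite Y" using Y finite_W finite_subset by blast
  have "(\<Sum>i\<in>\<Gamma>. \<Sum>u\<in>subtree E v i - {i}. (1 - ?e u * ind X i) * ind Y u)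
      = (\<Sum>i\<in>\<Gamma>. \<Sum>u\<in>{u \<in> Y. branch u = i}. 1 - ?e u * ind X (branch u))"
    using subtree_sum[OF _ Y, of _ "\<lambda>i u. 1 - ?e u * ind X i"] by simp
  also have "\<dots> = (\<Sum>u\<in>Y. 1 - ?e u * ind X (branch u))"
    using \<open>finite Y\<close> finite_\<Gamma> branch(1) Y by (intro sum.group) auto
  finally have den: "(\<Sum>i\<in>\<Gamma>. (1 - ?c i) * ind X i +
                         (\<Sum>u\<in>subtree E v i - {i}. (1 - ?e u * ind X i) * ind Y u))
                     = pr_denominator ?c ?e branch X Y"
    using sum_times_ind[OF finite_\<Gamma>, of "\<lambda>i. 1 - ?c i" X] X
    by (simp add: sum.distrib pr_denominator_def Int_absorb1)
  have num: "(\<Sum>i\<in>\<Gamma>. ?a i * ind X i) = (\<Sum>i\<in>X. ?a i)"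
    using sum_times_ind[OF finite_\<Gamma>, of ?a X] X by (simp add: Int_absorb1)
  show ?thesis
    unfolding F_def den num pr_ratio_def
    using sum_ind[OF finite_\<Gamma> X] sum_ind[OF finite_W Y] by simp
qed

end

locale pagerank_tree = rooted_tree V E v
  for V :: "'a set" and E :: "'a \<Rightarrow> 'a \<Rightarrow> bool" and v :: 'a +
  fixes \<alpha> :: real and q :: "'a \<Rightarrow> real" and ws :: "'a list"
  assumes \<alpha>_pos: "0 < \<alpha>" and \<alpha>_less_1: "\<alpha> < 1"
    and q_nonneg: "\<forall>u\<in>V. 0 \<le> q u"
    and ws_distinct: "distinct ws" and ws_set: "set ws = W_set V E v"
    and ws_sorted: "sorted_wrt (\<lambda>a b. e_const V E \<alpha> v a \<ge> e_const V E \<alpha> v b) ws"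
begin

lemma phi_range: "0 \<le> phi V E \<alpha> v u" "phi V E \<alpha> v u \<le> 1"
  using phi_fixed_point[OF finite_V \<alpha>_pos \<alpha>_less_1 root_in_V] by auto

text \<open>The constants of the theorem satisfy the hypotheses of the exchange argument; the key
  one, \<open>e u \<le> c (branch u)\<close>, is the monotonicity of the potentials along branches.\<close>
sublocale exch: prefix_exchange \<Gamma> W "a_const V E \<alpha> q v" "c_const V E \<alpha> v" "e_const V E \<alpha> v" branch ws
proof
  show "finite \<Gamma>" by (rule finite_\<Gamma>)
  show "distinct ws" "set ws = W" "sorted_wrt (\<lambda>a b. e_const V E \<alpha> v a \<ge> e_const V E \<alpha> v b) ws"
    by (rule ws_distinct ws_set ws_sorted)+
  show "0 \<le> a_const V E \<alpha> q v i" if "i \<in> \<Gamma>" for i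
    using subtree_subset_V[OF that] q_nonneg phi_range \<alpha>_pos unfolding a_const_def
    by (intro mult_nonneg_nonneg sum_nonneg) auto
  show "0 \<le> c_const V E \<alpha> v i" for i
    using phi_range \<alpha>_less_1 unfolding c_const_def by simp
  show "c_const V E \<alpha> v i < 1" for i
  proof -
    have "(1 - \<alpha>) * phi V E \<alpha> v i \<le> 1 - \<alpha>" using phi_range \<alpha>_less_1 by (simp add: mult_left_le)
    then show ?thesis using \<alpha>_pos unfolding c_const_def by linarith
  qed
  show "0 \<le> e_const V E \<alpha> v u" for u
    using phi_range \<alpha>_less_1 unfolding e_const_def by simp
  show "branch u \<in> \<Gamma>" if "u \<in> W" for u
    using branch(1)[OF that] .
  show "e_const V E \<alpha> v u \<le> c_const V E \<alpha> v (branch u)" if "u \<in> W" for u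
    using phi_le_branch[OF \<alpha>_pos \<alpha>_less_1 that] \<alpha>_less_1
    unfolding e_const_def c_const_def by (simp add: mult_left_mono)
qed

definition all_values :: "nat \<Rightarrow> real set" where
  "all_values l = {F V E \<alpha> q v (ind X) (ind Y) | X Y.
                     X \<subseteq> nbrs V E v \<and> X \<noteq> {} \<and> Y \<subseteq> W_set V E v \<and> card X + card Y = l}"

definition prefix_values :: "nat \<Rightarrow> real set" where
  "prefix_values l = {F V E \<alpha> q v (ind X) (ind (set (take l2 ws))) | X l1 l2.
                        X \<subseteq> nbrs V E v \<and> card X = l1 \<and> 1 \<le> l1 \<and> l1 \<le> card (nbrs V E v)
                        \<and> l2 \<le> card (W_set V E v) \<and> l1 + l2 = l}"

lemma finite_all_values: "finite (all_values l)"
proof (rule finite_subset)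
  show "all_values l \<subseteq> (\<lambda>(X, Y). F V E \<alpha> q v (ind X) (ind Y)) ` (Pow \<Gamma> \<times> Pow W)"
  proof
    fix s assume "s \<in> all_values l"
    then obtain X Y where "X \<subseteq> \<Gamma>" "Y \<subseteq> W" "s = F V E \<alpha> q v (ind X) (ind Y)"
      unfolding all_values_def by blast
    then show "s \<in> (\<lambda>(X, Y). F V E \<alpha> q v (ind X) (ind Y)) ` (Pow \<Gamma> \<times> Pow W)"
      by (intro image_eqI[of _ _ "(X, Y)"]) auto
  qed
  show "finite ((\<lambda>(X, Y). F V E \<alpha> q v (ind X) (ind Y)) ` (Pow \<Gamma> \<times> Pow W))"
    using finite_\<Gamma> finite_W by simp
qed

lemma prefix_values_subset: "prefix_values l \<subseteq> all_values l"
proof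
  fix s assume "s \<in> prefix_values l"
  then obtain X k where X: "X \<subseteq> \<Gamma>" "1 \<le> card X" and k: "k \<le> card W" "card X + k = l"
    and s: "s = F V E \<alpha> q v (ind X) (ind (exch.prefix k))"
    unfolding prefix_values_def by blast
  have "X \<noteq> {}" using X(2) by auto
  then show "s \<in> all_values l"
    unfolding all_values_def using X(1) k s exch.prefix_subset exch.card_prefix[OF k(1)]
    by (intro CollectI exI[of _ X] exI[of _ "exch.prefix k"]) auto
qed

lemma prefix_values_nonempty:
  assumes "1 \<le> l" and "l \<le> card V - 1"
  shows "prefix_values l \<noteq> {}"
proof -
  define l1 where "l1 = max 1 (l - card W)"
  have "\<Gamma> \<noteq> {}" using assms card_V_split by (intro nbrs_root_nonempty) linarith
  then have "1 \<le> card \<Gamma>" using finite_\<Gamma> by (simp add: Suc_le_eq card_gt_0_iff)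
  then have l1: "1 \<le> l1" "l1 \<le> card \<Gamma>" "l1 \<le> l" "l - l1 \<le> card W"
    using assms card_V_split unfolding l1_def by auto
  obtain X where "X \<subseteq> \<Gamma>" "card X = l1" using l1(2) obtain_subset_with_card_n by metis
  then have "F V E \<alpha> q v (ind X) (ind (exch.prefix (l - l1))) \<in> prefix_values l"
    unfolding prefix_values_def using l1 by (intro CollectI exI[of _ X] exI[of _ l1] exI[of _ "l - l1"]) auto
  then show ?thesis by blast
qed

lemma all_values_dominated:
  assumes "s \<in> all_values l"
  shows "\<exists>t\<in>prefix_values l. s \<le> t"
proof -
  obtain X Y where X: "X \<subseteq> \<Gamma>" "X \<noteq> {}" and Y: "Y \<subseteq> W" and size: "card X + card Y = l"
    and s: "s = F V E \<alpha> q v (ind X) (ind Y)"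
    using assms unfolding all_values_def by blast
  obtain X' k where X': "X' \<subseteq> \<Gamma>" "X' \<noteq> {}" and k: "k \<le> card W" "card X' + k = card X + card Y"
    and ratio: "exch.ratio X Y \<le> exch.ratio X' (exch.prefix k)"
    using exch.exchange_to_prefix[OF X Y] by blast
  have "s \<le> F V E \<alpha> q v (ind X') (ind (exch.prefix k))"
    unfolding s F_as_ratio[OF X(1) Y] F_as_ratio[OF X'(1) exch.prefix_subset] exch.card_prefix[OF k(1)] k(2)
    using ratio by (simp add: mult_left_mono)
  moreover have "card X' \<le> card \<Gamma>" using X'(1) finite_\<Gamma> by (rule card_mono[rotated])
  moreover have "1 \<le> card X'" using X' finite_\<Gamma> by (meson card_0_eq finite_subset less_one not_less)
  ultimately show ?thesis
    unfolding prefix_values_def using X'(1) k size by blast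
qed

end

theorem lemma4p3:
  fixes V :: "'a set" and E :: "'a \<Rightarrow> 'a \<Rightarrow> bool" and \<alpha> :: real
    and q :: "'a \<Rightarrow> real" and v :: 'a and ws :: "'a list" and l :: nat
  assumes "tree V E"
    and "0 < \<alpha>" and "\<alpha> < 1"
    and "\<forall>u\<in>V. 0 \<le> q u" and "(\<Sum>u\<in>V. q u) = 1"
    and "v \<in> V"
    and "distinct ws" and "set ws = W_set V E v"
    and "sorted_wrt (\<lambda>a b. e_const V E \<alpha> v a \<ge> e_const V E \<alpha> v b) ws"
    and "1 \<le> l" and "l \<le> card V - 1"
  shows "Max {F V E \<alpha> q v (ind X) (ind Y) | X Y.
                X \<subseteq> nbrs V E v \<and> X \<noteq> {} \<and> Y \<subseteq> W_set V E v \<and> card X + card Y = l}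
       = Max {F V E \<alpha> q v (ind X) (ind (set (take l2 ws))) | X l1 l2.
                X \<subseteq> nbrs V E v \<and> card X = l1 \<and> 1 \<le> l1 \<and> l1 \<le> card (nbrs V E v)
                \<and> l2 \<le> card (W_set V E v) \<and> l1 + l2 = l}"
proof -
  interpret pagerank_tree V E v \<alpha> q ws
    using assms by unfold_locales auto
  have "Max (all_values l) = Max (prefix_values l)"
    using finite_all_values prefix_values_subset prefix_values_nonempty[OF assms(10,11)]
      all_values_dominated by (rule Max_eq_dominating_subset)
  then show ?thesis unfolding all_values_def prefix_values_def .
qed

end
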